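(* Let $X$ be a vector space, let $p:X\to\mathbb{R}$ be a sub-additive functional (i.e., $p(x+y)\le p(x)+p(y)$ for all $x,y\in X$), let $S$ be a proper subset of $X$, and let $F:S\to\mathbb{R}$ satisfy $F(s_1)+F(s_2)\le p(s_1+s_2)$ for all $s_1,s_2\in S$ with $s_1\neq s_2$. Then $F$ has an extension $\hat F:X\to\mathbb{R}$ with $\hat F(s)=F(s)$ for all $s\in S$ and $\hat F(x_1)+\hat F(x_2)\le p(x_1+x_2)$ for all $x_1,x_2\in X$ with $x_1\neq x_2$.
   Context: $X$ is a vector space over $K$, where $K$ is $\mathbb{R}$ or $\mathbb{C}$. *)

theory Defs
  imports Complex_Main
begin

end

theory Submission
  imports Defs
begin

text \<open>Fix any anchor point s0 of S. Outside S, the extension takes the smallest of three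
  values: -p(-x), which pairs correctly with any other value of the same kind because
  x \<mapsto> -p(-x) lies below p and is superadditive; F s0 - p(s0 - x), which pairs correctly
  with every s \<noteq> s0 in S by routing s + s0 = (s + x) + (s0 - x) through subadditivity;
  and p(x + s0) - F s0, which pairs correctly with s0 itself.\<close>

lemma subadditive_neg_le:
  fixes p :: "'a::group_add \<Rightarrow> real"
  assumes subadd: "\<And>x y. p (x + y) \<le> p x + p y"
  shows "- p (- z) \<le> p z"
proof -
  have "p 0 \<ge> 0" using subadd[of 0 0] by simp
  moreover have "p 0 \<le> p z + p (- z)" using subadd[of z "- z"] by simp
  ultimately show ?thesis by linarith
qed

lemma subadditive_neg_neg_add_le:
  fixes p :: "'a::ab_group_add \<Rightarrow> real"
  assumes subadd: "\<And>x y. p (x + y) \<le> p x + p y"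
  shows "- p (- x) - p (- y) \<le> p (x + y)"
proof -
  have "p (- (x + y)) \<le> p (- x) + p (- y)"
    using subadd[of "- x" "- y"] by (simp add: add.commute)
  with subadditive_neg_le[OF subadd, of "x + y"] show ?thesis by linarith
qed

definition extension :: "('a::ab_group_add \<Rightarrow> real) \<Rightarrow> 'a set \<Rightarrow> ('a \<Rightarrow> real) \<Rightarrow> 'a \<Rightarrow> real"
  where "extension p S F x =
    (if x \<in> S then F x
     else let s0 = SOME s. s \<in> S in
       min (- p (- x)) (min (F s0 - p (s0 - x)) (p (x + s0) - F s0)))"

lemma extension_in: "x \<in> S \<Longrightarrow> extension p S F x = F x"
  by (simp add: extension_def)

lemma extension_notin_le:
  assumes "x \<notin> S"
  shows "extension p S F x \<le> - p (- x)"
    and "extension p S F x \<le> F (SOME s. s \<in> S) - p ((SOME s. s \<in> S) - x)"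
    and "extension p S F x \<le> p (x + (SOME s. s \<in> S)) - F (SOME s. s \<in> S)"
  using assms by (auto simp: extension_def Let_def)

lemma extension_in_notin_le:
  fixes p :: "'a::ab_group_add \<Rightarrow> real"
  assumes subadd: "\<And>x y. p (x + y) \<le> p x + p y"
    and F_le: "\<And>s1 s2. s1 \<in> S \<Longrightarrow> s2 \<in> S \<Longrightarrow> s1 \<noteq> s2 \<Longrightarrow> F s1 + F s2 \<le> p (s1 + s2)"
    and s: "s \<in> S" and x: "x \<notin> S"
  shows "F s + extension p S F x \<le> p (s + x)"
proof -
  define s0 where "s0 = (SOME s. s \<in> S)"
  have s0: "s0 \<in> S" using s unfolding s0_def by (rule someI)
  show ?thesis
  proof (cases "s = s0")
    case True
    then show ?thesis
      using extension_notin_le(3)[OF x, of p F] by (simp add: s0_def add.commute)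
  next
    case False
    have "F s + F s0 \<le> p ((s + x) + (s0 - x))" using F_le[OF s s0 False] by simp
    also have "\<dots> \<le> p (s + x) + p (s0 - x)" by (rule subadd)
    finally show ?thesis using extension_notin_le(2)[OF x, of p F] by (simp add: s0_def)
  qed
qed

lemma extension_add_le:
  fixes p :: "'a::ab_group_add \<Rightarrow> real"
  assumes subadd: "\<And>x y. p (x + y) \<le> p x + p y"
    and F_le: "\<And>s1 s2. s1 \<in> S \<Longrightarrow> s2 \<in> S \<Longrightarrow> s1 \<noteq> s2 \<Longrightarrow> F s1 + F s2 \<le> p (s1 + s2)"
    and "x1 \<noteq> x2"
  shows "extension p S F x1 + extension p S F x2 \<le> p (x1 + x2)"
proof -
  note in_notin = extension_in_notin_le[OF subadd F_le]
  consider "x1 \<in> S" "x2 \<in> S" | "x1 \<in> S" "x2 \<notin> S" | "x1 \<notin> S" "x2 \<in> S" | "x1 \<notin> S" "x2 \<notin> S"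
    by blast
  then show ?thesis
  proof cases
    case 1
    then show ?thesis using F_le \<open>x1 \<noteq> x2\<close> by (simp add: extension_in)
  next
    case 2
    then show ?thesis using in_notin[where s = x1 and x = x2] by (simp add: extension_in)
  next
    case 3
    then show ?thesis using in_notin[where s = x2 and x = x1] by (simp add: extension_in add.commute)
  next
    case 4
    then have "extension p S F x1 \<le> - p (- x1)" "extension p S F x2 \<le> - p (- x2)"
      by (simp_all add: extension_notin_le(1))
    with subadditive_neg_neg_add_le[OF subadd, of x1 x2] show ?thesis by linarith
  qed
qed

theorem theorem4:
  fixes p :: "'a::real_vector \<Rightarrow> real" and S :: "'a set" and F :: "'a \<Rightarrow> real"
  assumes subadd: "\<forall>x y. p (x + y) \<le> p x + p y"
    and proper: "S \<subset> UNIV"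
    and F_le: "\<forall>s1\<in>S. \<forall>s2\<in>S. s1 \<noteq> s2 \<longrightarrow> F s1 + F s2 \<le> p (s1 + s2)"
  shows "\<exists>Fh :: 'a \<Rightarrow> real. (\<forall>s\<in>S. Fh s = F s) \<and>
           (\<forall>x1 x2. x1 \<noteq> x2 \<longrightarrow> Fh x1 + Fh x2 \<le> p (x1 + x2))"
proof (intro exI conjI allI impI ballI)
  show "extension p S F s = F s" if "s \<in> S" for s
    using that by (rule extension_in)
  show "extension p S F x1 + extension p S F x2 \<le> p (x1 + x2)" if "x1 \<noteq> x2" for x1 x2
    using extension_add_le[where p = p and S = S and F = F] subadd F_le that by simp
qed

end
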